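(* Let $\mathbf{Z}=\{\mathbf{z}_i\}_{i=1}^n$ be a $G$-networked sample and $\xi$ a function on $\mathcal{Z}$ with mean $\mu$, variance $\sigma^2$, and $|\xi(\mathbf{z})-\mu|\le M$ for $\rho$-almost all $\mathbf{z}$. If $\mathbf{w}$ is an optimal weighting of $G$ and $\mathsf{s}=\mathsf{s}(G)$, then for all $\epsilon>0$, $$\Pr\Big(\sum_{i=1}^n w_i(\xi(\mathbf{z}_i)-\mu)\ge\epsilon\Big)\le\exp\Big(-\frac{\mathsf{s}\sigma^2}{M^2}\,h\Big(\frac{M\epsilon}{\mathsf{s}\sigma^2}\Big)\Big),$$ where $h(a)=(1+a)\log(1+a)-a$.
   Context: Networked setting: $G$ is a $k$-partite hypergraph with hyperedges $e_1,\dots,e_n$; vertex set partitioned into $V^{(1)},\dots,V^{(k)}$, each hyperedge containing exactly one vertex $e^{(j)}$ of each $V^{(j)}$. $\mathcal{X}=\mathcal{X}^{(1)}\times\cdots\times\mathcal{X}^{(k)}$ (compact metric spaces), $\mathcal{Y}=\mathbb{R}$, $\mathcal{Z}=\mathcal{X}\times\mathcal{Y}$. Each vertex $v\in V^{(j)}$ gets a feature $\phi(v)$ drawn independently from $\rho_j$, independently of the hypergraph. Hyperedge $e_i$ yields $\mathbf{z}_i=(\mathbf{x}_i,y_i)$, $\mathbf{x}_i=(\phi(e_i^{(1)}),\dots,\phi(e_i^{(k)}))$, labels conditionally independent given the features with $y_i\sim\rho_{y|\mathbf{x}}(\cdot\mid\mathbf{x}_i)$; $\rho=\rho_{y|\mathbf{x}}\rho_{\mathbf{x}}$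 with $\rho_{\mathbf{x}}=\prod_j\rho_j$, and mean/variance of $\xi$ are with respect to $\rho$. A feasible weighting is $\mathbf{w}$ with $w_i\ge0$ and $\sum_{i:\,v\in e_i}w_i\le1$ for every vertex $v$; $\mathsf{s}(G)=\max\sum_i w_i$ over feasible weightings, attained by an optimal weighting. *)

theory Defs
  imports "HOL-Probability.Probability"
begin

text \<open>k-partite hypergraph with vertex set V, vpart assignment vpart (V^(j) = {v in V. vpart v = j}),
  and hyperedges e_0,...,e_{n-1}; hyperedge i contains exactly the vertices e i j, j < k,
  where e i j is its vertex in vpart j.\<close>
definition kpartite_hypergraph ::
  "nat \<Rightarrow> 'v set \<Rightarrow> ('v \<Rightarrow> nat) \<Rightarrow> nat \<Rightarrow> (nat \<Rightarrow> nat \<Rightarrow> 'v) \<Rightarrow> bool" where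
  "kpartite_hypergraph k V vpart n e \<longleftrightarrow>
     finite V \<and> (\<forall>v\<in>V. vpart v < k) \<and> (\<forall>i<n. \<forall>j<k. e i j \<in> V \<and> vpart (e i j) = j)"

definition hedge :: "nat \<Rightarrow> (nat \<Rightarrow> nat \<Rightarrow> 'v) \<Rightarrow> nat \<Rightarrow> 'v set" where
  "hedge k e i = {e i j | j. j < k}"

definition feasible_weighting ::
  "nat \<Rightarrow> 'v set \<Rightarrow> nat \<Rightarrow> (nat \<Rightarrow> nat \<Rightarrow> 'v) \<Rightarrow> (nat \<Rightarrow> real) \<Rightarrow> bool" where
  "feasible_weighting k V n e w \<longleftrightarrow>
     (\<forall>i<n. 0 \<le> w i) \<and> (\<forall>v\<in>V. (\<Sum>i\<in>{i. i < n \<and> v \<in> hedge k e i}. w i) \<le> 1)"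

definition s_G :: "nat \<Rightarrow> 'v set \<Rightarrow> nat \<Rightarrow> (nat \<Rightarrow> nat \<Rightarrow> 'v) \<Rightarrow> real" where
  "s_G k V n e = Sup {(\<Sum>i<n. w i) | w. feasible_weighting k V n e w}"

definition optimal_weighting ::
  "nat \<Rightarrow> 'v set \<Rightarrow> nat \<Rightarrow> (nat \<Rightarrow> nat \<Rightarrow> 'v) \<Rightarrow> (nat \<Rightarrow> real) \<Rightarrow> bool" where
  "optimal_weighting k V n e w \<longleftrightarrow>
     feasible_weighting k V n e w \<and> (\<Sum>i<n. w i) = s_G k V n e"

text \<open>Feature space X = X^(1) x ... x X^(k), rendered as extensional functions on {..<k}
  with the product measure rho_x = prod_j rho_j.\<close>
definition rho_x :: "nat \<Rightarrow> (nat \<Rightarrow> 'x measure) \<Rightarrow> (nat \<Rightarrow> 'x) measure" where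
  "rho_x k rho = PiM {..<k} rho"

text \<open>Joint distribution rho = rho_{y|x} rho_x on Z = X x R, where K x = rho_{y|x}(. | x).\<close>
definition rho_joint ::
  "nat \<Rightarrow> (nat \<Rightarrow> 'x measure) \<Rightarrow> ((nat \<Rightarrow> 'x) \<Rightarrow> real measure) \<Rightarrow> ((nat \<Rightarrow> 'x) \<times> real) measure" where
  "rho_joint k rho K = rho_x k rho \<bind> (\<lambda>x. distr (K x) (rho_x k rho \<Otimes>\<^sub>M borel) (\<lambda>y. (x, y)))"

definition feature_measure :: "'v set \<Rightarrow> ('v \<Rightarrow> nat) \<Rightarrow> (nat \<Rightarrow> 'x measure) \<Rightarrow> ('v \<Rightarrow> 'x) measure" where
  "feature_measure V vpart rho = PiM V (\<lambda>v. rho (vpart v))"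

definition hedge_features :: "nat \<Rightarrow> (nat \<Rightarrow> nat \<Rightarrow> 'v) \<Rightarrow> nat \<Rightarrow> ('v \<Rightarrow> 'x) \<Rightarrow> (nat \<Rightarrow> 'x)" where
  "hedge_features k e i \<phi> = restrict (\<lambda>j. \<phi> (e i j)) {..<k}"

text \<open>Underlying probability space of a G-networked sample: outcomes (phi, y) with
  phi the vertex features and y the labels; given phi, the labels y_i are independent
  with y_i ~ K x_i.\<close>
definition networked_space ::
  "nat \<Rightarrow> 'v set \<Rightarrow> ('v \<Rightarrow> nat) \<Rightarrow> (nat \<Rightarrow> 'x measure) \<Rightarrow> ((nat \<Rightarrow> 'x) \<Rightarrow> real measure)
    \<Rightarrow> nat \<Rightarrow> (nat \<Rightarrow> nat \<Rightarrow> 'v) \<Rightarrow> (('v \<Rightarrow> 'x) \<times> (nat \<Rightarrow> real)) measure" where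
  "networked_space k V vpart rho K n e =
     feature_measure V vpart rho \<bind>
       (\<lambda>\<phi>. distr (PiM {..<n} (\<lambda>i. K (hedge_features k e i \<phi>)))
                   (feature_measure V vpart rho \<Otimes>\<^sub>M PiM {..<n} (\<lambda>_. borel))
                   (\<lambda>y. (\<phi>, y)))"

definition sample_z :: "nat \<Rightarrow> (nat \<Rightarrow> nat \<Rightarrow> 'v) \<Rightarrow> nat \<Rightarrow> ('v \<Rightarrow> 'x) \<times> (nat \<Rightarrow> real) \<Rightarrow> (nat \<Rightarrow> 'x) \<times> real" where
  "sample_z k e i \<omega> = (hedge_features k e i (fst \<omega>), snd \<omega> i)"

definition bennett_h :: "real \<Rightarrow> real" where
  "bennett_h a = (1 + a) * ln (1 + a) - a"

end

theory Submission
  imports Defs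
begin

text \<open>
  Write X for the deviation xi - mu, truncated to [-M, M], which changes it only on a null set.
  By Chernoff's method the probability is at most exp (-t eps) times the moment generating function
  of the weighted sum. Given the vertex features the labels are independent, and since every
  weight is at most one, Jensen's inequality bounds the conditional expectation by the product of
  g(x_i) powr w_i, where g is the conditional moment generating function of X given the features.
  The examples share vertices, but the vertex features are independent and the weights at every
  vertex sum to at most one, so Finner's inequality bounds the expectation of this product by
  (E g) powr s = (E exp (t X)) powr s. Bennett's estimate
  E exp (t X) <= exp (sigma^2 / M^2 * (exp (t M) - 1 - t M)) and the choice
  t = ln (1 + M eps / (s sigma^2)) / M give the bound.
\<close>

lemma sums_exp_minus_one_minus:
  "(\<lambda>n. (x::real) ^ (n + 2) / fact (n + 2)) sums (exp x - 1 - x)"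
proof -
  have "(\<lambda>n. x ^ n / fact n) sums exp x"
    using exp_converges[of x] by (simp add: divide_inverse mult.commute)
  then have "(\<lambda>n. x ^ (n + 2) / fact (n + 2)) sums (exp x - (\<Sum>n<2. x ^ n / fact n))"
    by (subst sums_iff_shift) simp
  then show ?thesis by (simp add: numeral_2_eq_2 diff_diff_eq)
qed

lemma exp_minus_one_minus_le:
  fixes u U :: real
  assumes "\<bar>u\<bar> \<le> U" "U > 0"
  shows "exp u - 1 - u \<le> u\<^sup>2 / U\<^sup>2 * (exp U - 1 - U)"
proof (rule sums_le[OF _ sums_exp_minus_one_minus sums_mult[OF sums_exp_minus_one_minus]])
  fix n
  have "u ^ (n + 2) \<le> \<bar>u\<bar> ^ (n + 2)" by (metis abs_ge_self power_abs)
  also have "\<dots> = u\<^sup>2 * \<bar>u\<bar> ^ n" by (simp add: power_add power2_abs power2_eq_square mult.commute)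
  also have "\<dots> \<le> u\<^sup>2 * U ^ n" by (intro mult_left_mono power_mono) (use assms in auto)
  also have "\<dots> = u\<^sup>2 / U\<^sup>2 * U ^ (n + 2)" using assms
    by (simp add: power_add field_simps power2_eq_square)
  finally have "u ^ (n + 2) \<le> u\<^sup>2 / U\<^sup>2 * U ^ (n + 2)" .
  from divide_right_mono[OF this fact_ge_zero]
  show "u ^ (n + 2) / fact (n + 2) \<le> u\<^sup>2 / U\<^sup>2 * (U ^ (n + 2) / fact (n + 2))"
    unfolding times_divide_eq_right .
qed

lemma exp_mult_le_Bennett:
  fixes x t M :: real
  assumes "\<bar>x\<bar> \<le> M" "M > 0" "t \<ge> 0"
  shows "exp (t * x) \<le> 1 + t * x + x\<^sup>2 / M\<^sup>2 * (exp (t * M) - 1 - t * M)"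
proof (cases "t = 0")
  case False
  with assms have t: "t > 0" by simp
  have "\<bar>t * x\<bar> \<le> t * M" using assms t by (simp add: abs_mult)
  from exp_minus_one_minus_le[OF this]
  have "exp (t * x) - 1 - t * x \<le> (t * x)\<^sup>2 / (t * M)\<^sup>2 * (exp (t * M) - 1 - t * M)"
    using t assms by simp
  also have "(t * x)\<^sup>2 / (t * M)\<^sup>2 = x\<^sup>2 / M\<^sup>2" using t by (simp add: power_mult_distrib)
  finally show ?thesis by simp
qed simp

text \<open>The value of t minimises the exponent of the Chernoff bound.\<close>
lemma Bennett_exponent:
  fixes M v \<epsilon> :: real
  assumes "M > 0" "v > 0" "\<epsilon> \<ge> 0"
  defines "t \<equiv> ln (1 + M * \<epsilon> / v) / M"
  shows "v / M\<^sup>2 * (exp (t * M) - 1 - t * M) - t * \<epsilon> = - (v / M\<^sup>2) * bennett_h (M * \<epsilon> / v)"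
proof -
  define a where "a = M * \<epsilon> / v"
  have a: "a \<ge> 0" using assms by (simp add: a_def)
  have tM: "t * M = ln (1 + a)" using assms by (simp add: t_def a_def)
  have exp_tM: "exp (t * M) = 1 + a" using a by (simp add: tM)
  have t\<epsilon>: "t * \<epsilon> = ln (1 + a) * a * (v / M\<^sup>2)"
    using assms by (simp add: t_def a_def field_simps power2_eq_square)
  have ring_identity: "q * (a - L) - L * a * q = - q * ((1 + a) * L - a)" for q L :: real
    by (simp add: algebra_simps)
  have "v / M\<^sup>2 * (exp (t * M) - 1 - t * M) - t * \<epsilon>
      = v / M\<^sup>2 * (a - ln (1 + a)) - ln (1 + a) * a * (v / M\<^sup>2)"
    by (simp add: exp_tM t\<epsilon>) (simp add: tM)
  also have "\<dots> = - (v / M\<^sup>2) * ((1 + a) * ln (1 + a) - a)"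
    by (rule ring_identity)
  finally show ?thesis by (simp add: bennett_h_def a_def)
qed

text \<open>Weighted AM-GM with the remaining weight 1 - sum w J on the value 1: Jensen's inequality
  for exp.\<close>
lemma prod_powr_le_weighted_sum:
  fixes a w :: "'i \<Rightarrow> real"
  assumes "finite J" "\<And>j. j \<in> J \<Longrightarrow> a j > 0" "\<And>j. j \<in> J \<Longrightarrow> w j \<ge> 0" "sum w J \<le> 1"
  shows "(\<Prod>j\<in>J. a j powr w j) \<le> (\<Sum>j\<in>J. w j * a j) + (1 - sum w J)"
proof -
  let ?S = "insert None (Some ` J)"
  let ?c = "\<lambda>q. case q of None \<Rightarrow> 1 - sum w J | Some j \<Rightarrow> w j"
  let ?y = "\<lambda>q. case q of None \<Rightarrow> 0 | Some j \<Rightarrow> ln (a j)"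
  have "exp (\<Sum>q\<in>?S. ?c q *\<^sub>R ?y q) \<le> (\<Sum>q\<in>?S. ?c q * exp (?y q))"
    using assms exp_convex
    by (intro convex_on_sum) (auto simp: sum.reindex inj_on_def split: option.splits)
  also have "(\<Sum>q\<in>?S. ?c q * exp (?y q)) = (\<Sum>j\<in>J. w j * a j) + (1 - sum w J)"
    using assms by (simp add: sum.reindex inj_on_def)
  also have "(\<Sum>q\<in>?S. ?c q *\<^sub>R ?y q) = (\<Sum>j\<in>J. w j * ln (a j))"
    using assms(1) by (simp add: sum.reindex inj_on_def)
  also have "exp (\<Sum>j\<in>J. w j * ln (a j)) = (\<Prod>j\<in>J. a j powr w j)"
    using assms by (auto simp: exp_sum powr_def mult.commute intro!: prod.cong) (metis less_irrefl)
  finally show ?thesis .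
qed

lemma prod_powr_bounded:
  fixes f :: "'i \<Rightarrow> real"
  assumes "\<And>j. j \<in> J \<Longrightarrow> a \<le> f j \<and> f j \<le> b" "a > 0" "\<And>j. j \<in> J \<Longrightarrow> w j \<ge> 0"
  shows "0 \<le> (\<Prod>j\<in>J. f j powr w j) \<and> (\<Prod>j\<in>J. f j powr w j) \<le> (\<Prod>j\<in>J. b powr w j)"
  using assms by (auto intro!: prod_nonneg prod_mono powr_mono2 intro: order_trans[of 0 a])

context prob_space
begin

lemma integrable_bounded:
  fixes f :: "'a \<Rightarrow> real"
  assumes "f \<in> borel_measurable M" "\<And>x. x \<in> space M \<Longrightarrow> a \<le> f x \<and> f x \<le> b"
  shows "integrable M f"
  using assms by (intro integrable_const_bound[where B="max \<bar>a\<bar> \<bar>b\<bar>"] AE_I2) fastforce+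

lemma integral_bounded:
  fixes f :: "'a \<Rightarrow> real"
  assumes "f \<in> borel_measurable M" "\<And>x. x \<in> space M \<Longrightarrow> a \<le> f x \<and> f x \<le> b"
  shows "a \<le> (\<integral>x. f x \<partial>M) \<and> (\<integral>x. f x \<partial>M) \<le> b"
  using integral_ge_const[OF integrable_bounded[OF assms] AE_I2]
    integral_le_const[OF integrable_bounded[OF assms] AE_I2] assms(2)
  by auto

text \<open>Hoelder's inequality in the form of a weighted geometric mean: normalising each factor by
  its integral reduces it to the weighted AM-GM inequality.\<close>
lemma integral_prod_powr_le:
  fixes f :: "'i \<Rightarrow> 'a \<Rightarrow> real"
  assumes J: "finite J"
    and meas: "\<And>j. j \<in> J \<Longrightarrow> f j \<in> borel_measurable M"
    and bnd: "\<And>j x. j \<in> J \<Longrightarrow> x \<in> space M \<Longrightarrow> a \<le> f j x \<and> f j x \<le> b"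
    and a: "a > 0" and w: "\<And>j. j \<in> J \<Longrightarrow> w j \<ge> 0" and W: "sum w J \<le> 1"
  shows "(\<integral>x. (\<Prod>j\<in>J. f j x powr w j) \<partial>M) \<le> (\<Prod>j\<in>J. (\<integral>x. f j x \<partial>M) powr w j)"
proof -
  have int: "integrable M (f j)" if "j \<in> J" for j
    using integrable_bounded[OF meas bnd] that by blast
  define c where "c j = (\<integral>x. f j x \<partial>M)" for j
  have c_pos: "c j > 0" if "j \<in> J" for j
    using integral_bounded[OF meas bnd, OF that that] a by (simp add: c_def)
  define C where "C = (\<Prod>j\<in>J. c j powr w j)"
  have C_pos: "C > 0" unfolding C_def using c_pos
    by (intro prod_pos) (simp add: less_imp_neq[symmetric])
  have int_prod: "integrable M (\<lambda>x. \<Prod>j\<in>J. f j x powr w j)"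
    using meas bnd a w
    by (intro integrable_bounded[of _ 0 "\<Prod>j\<in>J. b powr w j"] prod_powr_bounded) auto
  have pointwise: "(\<Prod>j\<in>J. f j x powr w j) / C \<le> (\<Sum>j\<in>J. w j * (f j x / c j)) + (1 - sum w J)"
    if x: "x \<in> space M" for x
  proof -
    have "(\<Prod>j\<in>J. f j x powr w j) / C = (\<Prod>j\<in>J. (f j x / c j) powr w j)"
      unfolding C_def prod_dividef[symmetric] by (intro prod.cong refl powr_divide[symmetric])
    also have "\<dots> \<le> (\<Sum>j\<in>J. w j * (f j x / c j)) + (1 - sum w J)"
      using bnd[OF _ x] a c_pos by (intro prod_powr_le_weighted_sum[OF J _ w W]) force
    finally show ?thesis .
  qed
  have "(\<integral>x. (\<Prod>j\<in>J. f j x powr w j) \<partial>M) / C = (\<integral>x. (\<Prod>j\<in>J. f j x powr w j) / C \<partial>M)"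
    by simp
  also have "\<dots> \<le> (\<integral>x. (\<Sum>j\<in>J. w j * (f j x / c j)) + (1 - sum w J) \<partial>M)"
    using int int_prod pointwise by (intro integral_mono) auto
  also have "\<dots> = (\<Sum>j\<in>J. w j * (c j / c j)) + (1 - sum w J)"
    using int by (auto simp: integral_sum c_def prob_space intro!: sum.cong)
  also have "\<dots> = 1"
    by (simp add: c_pos[THEN dual_order.strict_implies_not_eq] cong: sum.cong)
  finally show ?thesis using C_pos unfolding C_def c_def by (simp add: divide_le_eq)
qed

lemma integral_powr_le:
  fixes f :: "'a \<Rightarrow> real"
  assumes "f \<in> borel_measurable M" "\<And>x. x \<in> space M \<Longrightarrow> a \<le> f x \<and> f x \<le> b"
    and "a > 0" "0 \<le> w" "w \<le> 1"
  shows "(\<integral>x. f x powr w \<partial>M) \<le> (\<integral>x. f x \<partial>M) powr w"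
  using integral_prod_powr_le[of "{()}" "\<lambda>_. f" a b "\<lambda>_. w"] assms by simp

lemma Bennett_mgf_le:
  fixes X :: "'a \<Rightarrow> real"
  assumes X: "X \<in> borel_measurable M" and bnd: "\<And>x. x \<in> space M \<Longrightarrow> \<bar>X x\<bar> \<le> B"
    and B: "B > 0" and t: "t \<ge> 0" and mean: "(\<integral>x. X x \<partial>M) = 0"
  shows "(\<integral>x. exp (t * X x) \<partial>M) \<le> exp ((\<integral>x. (X x)\<^sup>2 \<partial>M) / B\<^sup>2 * (exp (t * B) - 1 - t * B))"
proof -
  let ?c = "exp (t * B) - 1 - t * B"
  have X_bnd: "- B \<le> X x \<and> X x \<le> B" if "x \<in> space M" for x
    using bnd[OF that] unfolding abs_le_iff by linarith
  have int_X: "integrable M X" using X_bnd by (rule integrable_bounded[OF X])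
  have X2_bnd: "0 \<le> (X x)\<^sup>2 \<and> (X x)\<^sup>2 \<le> B\<^sup>2" if "x \<in> space M" for x
    using bnd[OF that] B by (simp add: abs_le_square_iff[symmetric])
  have int_X2: "integrable M (\<lambda>x. (X x)\<^sup>2)"
    using X X2_bnd by (intro integrable_bounded[of _ 0 "B\<^sup>2"]) auto
  have "(\<lambda>x. exp (t * X x)) \<in> borel_measurable M" using X by measurable
  then have int_exp: "integrable M (\<lambda>x. exp (t * X x))"
    using X_bnd t by (intro integrable_bounded[of _ 0 "exp (t * B)"]) (auto intro!: mult_left_mono)
  have "(\<integral>x. exp (t * X x) \<partial>M) \<le> (\<integral>x. 1 + t * X x + (X x)\<^sup>2 / B\<^sup>2 * ?c \<partial>M)"
    using int_X int_X2 int_exp exp_mult_le_Bennett[OF bnd B t] by (intro integral_mono) auto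
  also have "\<dots> = 1 + (\<integral>x. (X x)\<^sup>2 \<partial>M) / B\<^sup>2 * ?c"
    using int_X int_X2 mean by (simp add: prob_space)
  also have "\<dots> \<le> exp ((\<integral>x. (X x)\<^sup>2 \<partial>M) / B\<^sup>2 * ?c)" by (rule exp_ge_add_one_self)
  finally show ?thesis .
qed

lemma truncated_deviation:
  fixes \<xi> :: "'a \<Rightarrow> real"
  assumes \<xi>: "\<xi> \<in> borel_measurable M" "integrable M \<xi>" and mean: "\<mu> = (\<integral>x. \<xi> x \<partial>M)"
    and bound: "AE x in M. \<bar>\<xi> x - \<mu>\<bar> \<le> B" and B: "B \<ge> 0"
  defines "X \<equiv> \<lambda>x. max (- B) (min B (\<xi> x - \<mu>))"
  shows "X \<in> borel_measurable M" and "\<And>x. \<bar>X x\<bar> \<le> B" and "AE x in M. \<xi> x - \<mu> = X x"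
    and "(\<integral>x. X x \<partial>M) = 0" and "(\<integral>x. (X x)\<^sup>2 \<partial>M) = (\<integral>x. (\<xi> x - \<mu>)\<^sup>2 \<partial>M)"
proof -
  show X_meas: "X \<in> borel_measurable M" unfolding X_def using \<xi>(1) by measurable
  show "\<bar>X x\<bar> \<le> B" for x using B by (simp add: X_def)
  show X_AE: "AE x in M. \<xi> x - \<mu> = X x" using bound by (rule eventually_mono) (auto simp: X_def)
  have "(\<integral>x. X x \<partial>M) = (\<integral>x. \<xi> x - \<mu> \<partial>M)"
    using X_AE \<xi>(1) X_meas by (intro integral_cong_AE) (auto elim: eventually_mono)
  also have "\<dots> = 0" using \<xi>(2) by (simp add: mean prob_space)
  finally show "(\<integral>x. X x \<partial>M) = 0" .
  show "(\<integral>x. (X x)\<^sup>2 \<partial>M) = (\<integral>x. (\<xi> x - \<mu>)\<^sup>2 \<partial>M)"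
    using X_AE \<xi>(1) X_meas by (intro integral_cong_AE) (auto elim: eventually_mono)
qed

end

lemma integral_PiM_restrict:
  fixes M :: "'v \<Rightarrow> 'a measure" and f :: "('v \<Rightarrow> 'a) \<Rightarrow> real"
  assumes M: "\<And>v. prob_space (M v)" and K: "finite K" "J \<subseteq> K"
    and f: "f \<in> borel_measurable (PiM J M)"
  shows "(\<integral>x. f (restrict x J) \<partial>PiM K M) = (\<integral>x. f x \<partial>PiM J M)"
proof -
  interpret product_prob_space M K
    by (simp add: product_prob_space_def product_prob_space_axioms_def product_sigma_finite_def
        M prob_space_imp_sigma_finite)
  show ?thesis
    by (subst distr_PiM_restrict_finite[OF finite_subset[OF K(2,1)] K(2), symmetric])
       (rule integral_distr[symmetric, OF measurable_restrict_subset[OF K(2)] f])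
qed

lemma
  fixes M :: "'v \<Rightarrow> 'a measure" and F :: "('v \<Rightarrow> 'a) \<Rightarrow> real"
  assumes M: "\<And>v. prob_space (M v)" and S: "finite S" "v \<notin> S"
    and F: "F \<in> borel_measurable (PiM (insert v S) M)"
    and bnd: "\<And>x. x \<in> space (PiM (insert v S) M) \<Longrightarrow> a \<le> F x \<and> F x \<le> b"
  shows borel_measurable_integral_component:
      "(\<lambda>\<psi>. \<integral>y. F (\<psi>(v := y)) \<partial>M v) \<in> borel_measurable (PiM S M)"
    and integral_component_bounded: "\<And>\<psi>. \<psi> \<in> space (PiM S M) \<Longrightarrow>
      a \<le> (\<integral>y. F (\<psi>(v := y)) \<partial>M v) \<and> (\<integral>y. F (\<psi>(v := y)) \<partial>M v) \<le> b"
    and integral_integral_component: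
      "(\<integral>\<psi>. (\<integral>y. F (\<psi>(v := y)) \<partial>M v) \<partial>PiM S M) = (\<integral>x. F x \<partial>PiM (insert v S) M)"
proof -
  interpret product_sigma_finite M
    unfolding product_sigma_finite_def using M prob_space_imp_sigma_finite by blast
  interpret Mv: prob_space "M v" by (rule M)
  show "(\<lambda>\<psi>. \<integral>y. F (\<psi>(v := y)) \<partial>M v) \<in> borel_measurable (PiM S M)"
    using measurable_compose[OF measurable_add_dim F]
    by (intro sigma_finite_measure.borel_measurable_lebesgue_integral
        [OF prob_space_imp_sigma_finite[OF M]])
       (simp add: case_prod_beta)
  show "a \<le> (\<integral>y. F (\<psi>(v := y)) \<partial>M v) \<and> (\<integral>y. F (\<psi>(v := y)) \<partial>M v) \<le> b"
    if \<psi>: "\<psi> \<in> space (PiM S M)" for \<psi>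
    using measurable_compose[OF measurable_component_update[OF \<psi> S(2)] F]
      bnd[OF measurable_space[OF measurable_component_update[OF \<psi> S(2)]]]
    by (rule Mv.integral_bounded)
  have "integrable (PiM (insert v S) M) F"
    using M bnd by (intro prob_space.integrable_bounded[OF prob_space_PiM F]) auto
  then show "(\<integral>\<psi>. (\<integral>y. F (\<psi>(v := y)) \<partial>M v) \<partial>PiM S M) = (\<integral>x. F x \<partial>PiM (insert v S) M)"
    by (rule product_integral_insert[OF S, symmetric])
qed

lemma
  fixes M :: "'v \<Rightarrow> 'a measure" and F :: "('v \<Rightarrow> 'a) \<Rightarrow> real"
  assumes M: "\<And>v. prob_space (M v)" and T: "finite T" "v \<notin> T" "S \<subseteq> insert v T"
    and F: "F \<in> borel_measurable (PiM S M)"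
    and bnd: "\<And>x. x \<in> space (PiM S M) \<Longrightarrow> a \<le> F x \<and> F x \<le> b"
  shows borel_measurable_integral_component_restrict:
      "(\<lambda>\<psi>. \<integral>y. F (restrict (\<psi>(v := y)) S) \<partial>M v) \<in> borel_measurable (PiM T M)"
    and integral_component_restrict_bounded: "\<And>\<psi>. \<psi> \<in> space (PiM T M) \<Longrightarrow>
      a \<le> (\<integral>y. F (restrict (\<psi>(v := y)) S) \<partial>M v) \<and> (\<integral>y. F (restrict (\<psi>(v := y)) S) \<partial>M v) \<le> b"
    and integral_integral_component_restrict:
      "(\<integral>\<psi>. (\<integral>y. F (restrict (\<psi>(v := y)) S) \<partial>M v) \<partial>PiM T M) = (\<integral>x. F x \<partial>PiM S M)"
proof -
  have meas: "(\<lambda>x. F (restrict x S)) \<in> borel_measurable (PiM (insert v T) M)"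
    using measurable_compose[OF measurable_restrict_subset[OF T(3)] F] .
  have bnd': "a \<le> F (restrict x S) \<and> F (restrict x S) \<le> b" if "x \<in> space (PiM (insert v T) M)" for x
    using bnd[OF measurable_space[OF measurable_restrict_subset[OF T(3)] that]] .
  show "(\<lambda>\<psi>. \<integral>y. F (restrict (\<psi>(v := y)) S) \<partial>M v) \<in> borel_measurable (PiM T M)"
    using meas bnd' by (rule borel_measurable_integral_component[OF M T(1,2)])
  show "a \<le> (\<integral>y. F (restrict (\<psi>(v := y)) S) \<partial>M v) \<and> (\<integral>y. F (restrict (\<psi>(v := y)) S) \<partial>M v) \<le> b"
    if "\<psi> \<in> space (PiM T M)" for \<psi>
    using meas bnd' that by (rule integral_component_bounded[OF M T(1,2)])
  have "(\<integral>\<psi>. (\<integral>y. F (restrict (\<psi>(v := y)) S) \<partial>M v) \<partial>PiM T M)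
      = (\<integral>x. F (restrict x S) \<partial>PiM (insert v T) M)"
    using meas bnd' by (rule integral_integral_component[OF M T(1,2)])
  also have "\<dots> = (\<integral>x. F x \<partial>PiM S M)"
    using T F by (intro integral_PiM_restrict M) auto
  finally show "(\<integral>\<psi>. (\<integral>y. F (restrict (\<psi>(v := y)) S) \<partial>M v) \<partial>PiM T M) = (\<integral>x. F x \<partial>PiM S M)" .
qed

lemma
  fixes F :: "'i \<Rightarrow> ('v \<Rightarrow> 'a) \<Rightarrow> real"
  assumes S: "\<And>i. i \<in> I \<Longrightarrow> S i \<subseteq> V" and F: "\<And>i. i \<in> I \<Longrightarrow> F i \<in> borel_measurable (PiM (S i) M)"
    and bnd: "\<And>i x. i \<in> I \<Longrightarrow> x \<in> space (PiM (S i) M) \<Longrightarrow> a \<le> F i x \<and> F i x \<le> b"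
    and a: "a > 0" and w: "\<And>i. i \<in> I \<Longrightarrow> w i \<ge> 0"
  shows borel_measurable_prod_powr_restrict:
      "(\<lambda>\<phi>. \<Prod>i\<in>I. F i (restrict \<phi> (S i)) powr w i) \<in> borel_measurable (PiM V M)"
    and prod_powr_restrict_bounded: "\<And>\<phi>. \<phi> \<in> space (PiM V M) \<Longrightarrow>
      0 \<le> (\<Prod>i\<in>I. F i (restrict \<phi> (S i)) powr w i)
      \<and> (\<Prod>i\<in>I. F i (restrict \<phi> (S i)) powr w i) \<le> (\<Prod>i\<in>I. b powr w i)"
proof -
  show "(\<lambda>\<phi>. \<Prod>i\<in>I. F i (restrict \<phi> (S i)) powr w i) \<in> borel_measurable (PiM V M)"
    using measurable_compose[OF measurable_restrict_subset[OF S] F]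
    by (intro borel_measurable_prod powr_real_measurable) auto
  fix \<phi> assume "\<phi> \<in> space (PiM V M)"
  then have "restrict \<phi> (S i) \<in> space (PiM (S i) M)" if "i \<in> I" for i
    using measurable_space[OF measurable_restrict_subset[OF S[OF that]]] by blast
  then show "0 \<le> (\<Prod>i\<in>I. F i (restrict \<phi> (S i)) powr w i)
      \<and> (\<Prod>i\<in>I. F i (restrict \<phi> (S i)) powr w i) \<le> (\<Prod>i\<in>I. b powr w i)"
    using bnd by (intro prod_powr_bounded[OF _ a w]) auto
qed

text \<open>Integrating out one coordinate: Hoelder's inequality applied to the factors depending on it,
  the others being constant.\<close>
lemma integral_prod_powr_update_le:
  fixes M :: "'v \<Rightarrow> 'a measure" and F :: "'i \<Rightarrow> ('v \<Rightarrow> 'a) \<Rightarrow> real"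
  assumes Mv: "prob_space (M v)" and I: "finite I" and \<phi>: "\<phi> \<in> space (PiM V M)" and v: "v \<notin> V"
    and S: "\<And>i. i \<in> I \<Longrightarrow> S i \<subseteq> insert v V"
    and F: "\<And>i. i \<in> I \<Longrightarrow> F i \<in> borel_measurable (PiM (S i) M)"
    and bnd: "\<And>i x. i \<in> I \<Longrightarrow> x \<in> space (PiM (S i) M) \<Longrightarrow> a \<le> F i x \<and> F i x \<le> b"
    and a: "a > 0" and w: "\<And>i. i \<in> I \<Longrightarrow> w i \<ge> 0" and W: "sum w {i\<in>I. v \<in> S i} \<le> 1"
  shows "(\<integral>y. (\<Prod>i\<in>I. F i (restrict (\<phi>(v := y)) (S i)) powr w i) \<partial>M v)
    \<le> (\<Prod>i\<in>I. (\<integral>y. F i (restrict (\<phi>(v := y)) (S i)) \<partial>M v) powr w i)"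
proof -
  interpret Mv: prob_space "M v" by (rule Mv)
  define A where "A = {i\<in>I. v \<in> S i}"
  define f where "f i y = F i (restrict (\<phi>(v := y)) (S i))" for i y
  define C where "C = (\<Prod>i\<in>I-A. F i (restrict \<phi> (S i)) powr w i)"
  have split: "(\<Prod>i\<in>I. h i) = (\<Prod>i\<in>A. h i) * (\<Prod>i\<in>I-A. h i)" for h :: "'i \<Rightarrow> real"
    using prod.subset_diff[of A I] I by (simp add: A_def mult.commute)
  have f_const: "f i = (\<lambda>_. F i (restrict \<phi> (S i)))" if "i \<in> I - A" for i
    using that by (auto simp: f_def A_def restrict_def fun_eq_iff intro!: arg_cong[where f="F i"])
  note update =
    measurable_compose[OF measurable_component_update[OF \<phi> v] measurable_restrict_subset[OF S]]
  have f_meas: "f i \<in> borel_measurable (M v)" if "i \<in> I" for i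
    unfolding f_def using measurable_compose[OF update[OF that] F[OF that]] .
  have f_bnd: "a \<le> f i y \<and> f i y \<le> b" if "i \<in> I" "y \<in> space (M v)" for i y
    unfolding f_def using bnd[OF that(1) measurable_space[OF update[OF that(1)] that(2)]] .
  have "(\<integral>y. (\<Prod>i\<in>I. f i y powr w i) \<partial>M v) = (\<integral>y. (\<Prod>i\<in>A. f i y powr w i) \<partial>M v) * C"
    unfolding split C_def by (simp add: f_const)
  also have "\<dots> \<le> (\<Prod>i\<in>A. (\<integral>y. f i y \<partial>M v) powr w i) * C"
    using I f_meas f_bnd w W unfolding A_def C_def
    by (intro mult_right_mono Mv.integral_prod_powr_le[OF _ _ _ a] prod_nonneg) auto
  also have "\<dots> = (\<Prod>i\<in>I. (\<integral>y. f i y \<partial>M v) powr w i)"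
    unfolding split C_def by (simp add: f_const Mv.prob_space)
  finally show ?thesis unfolding f_def .
qed

lemma Finner_inequality:
  fixes M :: "'v \<Rightarrow> 'a measure" and F :: "'i \<Rightarrow> ('v \<Rightarrow> 'a) \<Rightarrow> real"
    and S :: "'i \<Rightarrow> 'v set" and w :: "'i \<Rightarrow> real"
  assumes V: "finite V" and M: "\<And>v. prob_space (M v)" and I: "finite I"
    and S: "\<And>i. i \<in> I \<Longrightarrow> S i \<subseteq> V"
    and F: "\<And>i. i \<in> I \<Longrightarrow> F i \<in> borel_measurable (PiM (S i) M)"
    and bnd: "\<And>i x. i \<in> I \<Longrightarrow> x \<in> space (PiM (S i) M) \<Longrightarrow> a \<le> F i x \<and> F i x \<le> b"
    and a: "a > 0" and w: "\<And>i. i \<in> I \<Longrightarrow> w i \<ge> 0"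
    and W: "\<And>v. v \<in> V \<Longrightarrow> sum w {i\<in>I. v \<in> S i} \<le> 1"
  shows "(\<integral>\<phi>. (\<Prod>i\<in>I. F i (restrict \<phi> (S i)) powr w i) \<partial>PiM V M)
           \<le> (\<Prod>i\<in>I. (\<integral>x. F i x \<partial>PiM (S i) M) powr w i)"
  using V S F bnd W
proof (induction V arbitrary: S F rule: finite_induct)
  case empty
  then have "S i = {}" if "i \<in> I" for i using that by auto
  then show ?case
    by (simp add: PiM_empty lebesgue_integral_count_space_finite cong: prod.cong)
next
  case (insert v V)
  define S' where "S' i = S i - {v}" for i
  define F' where "F' i \<psi> = (\<integral>y. F i (restrict (\<psi>(v := y)) (S i)) \<partial>M v)" for i \<psi>
  let ?G = "\<lambda>\<phi>. \<Prod>i\<in>I. F i (restrict \<phi> (S i)) powr w i"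
  have S': "S' i \<subseteq> V" "finite (S' i)" "v \<notin> S' i" "S i \<subseteq> insert v (S' i)" if "i \<in> I" for i
    using insert.prems(1)[OF that] finite_subset[of "S' i" V] insert.hyps(1) by (auto simp: S'_def)
  have F': "F' i \<in> borel_measurable (PiM (S' i) M)"
    "\<And>\<psi>. \<psi> \<in> space (PiM (S' i) M) \<Longrightarrow> a \<le> F' i \<psi> \<and> F' i \<psi> \<le> b"
    "(\<integral>x. F' i x \<partial>PiM (S' i) M) = (\<integral>x. F i x \<partial>PiM (S i) M)" if i: "i \<in> I" for i
  proof -
    note F_i = insert.prems(2,3)[OF i]
    show "F' i \<in> borel_measurable (PiM (S' i) M)"
      unfolding F'_def[abs_def] using F_i
        by (rule borel_measurable_integral_component_restrict[OF M S'(2-4)[OF i]])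
    show "a \<le> F' i \<psi> \<and> F' i \<psi> \<le> b" if "\<psi> \<in> space (PiM (S' i) M)" for \<psi>
      unfolding F'_def using F_i that by (rule integral_component_restrict_bounded[OF M S'(2-4)[OF i]])
    show "(\<integral>x. F' i x \<partial>PiM (S' i) M) = (\<integral>x. F i x \<partial>PiM (S i) M)"
      unfolding F'_def using F_i by (rule integral_integral_component_restrict[OF M S'(2-4)[OF i]])
  qed
  have W': "sum w {i\<in>I. u \<in> S' i} \<le> 1" if "u \<in> V" for u
  proof -
    have "{i\<in>I. u \<in> S' i} = {i\<in>I. u \<in> S i}" using that insert.hyps(2) by (auto simp: S'_def)
    then show ?thesis using insert.prems(4)[of u] that by simp
  qed
  have F'_restrict: "F' i (restrict \<phi> (S' i)) = (\<integral>y. F i (restrict (\<phi>(v := y)) (S i)) \<partial>M v)"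
    if "i \<in> I" for i \<phi>
    using S'(4)[OF that] unfolding F'_def
    by (intro Bochner_Integration.integral_cong refl arg_cong[where f="F i"])
      (auto simp: restrict_def S'_def)
  note G_bnd = prod_powr_restrict_bounded[OF insert.prems(1,2,3) a w]
  note G_meas = borel_measurable_prod_powr_restrict[OF insert.prems(1,2,3) a w]
  note G'_bnd = prod_powr_restrict_bounded[OF S'(1) F'(1,2) a w]
  note G'_meas = borel_measurable_prod_powr_restrict[OF S'(1) F'(1,2) a w]
  have PiM_prob: "prob_space (PiM X M)" for X using M by (intro prob_space_PiM) auto
  have "(\<integral>\<phi>. ?G \<phi> \<partial>PiM (insert v V) M) = (\<integral>\<phi>. (\<integral>y. ?G (\<phi>(v := y)) \<partial>M v) \<partial>PiM V M)"
    by (rule integral_integral_component[OF M insert.hyps G_meas G_bnd, symmetric])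
  also have "\<dots> \<le> (\<integral>\<phi>. (\<Prod>i\<in>I. F' i (restrict \<phi> (S' i)) powr w i) \<partial>PiM V M)"
  proof (rule integral_mono)
    show "integrable (PiM V M) (\<lambda>\<phi>. \<integral>y. ?G (\<phi>(v := y)) \<partial>M v)"
      using borel_measurable_integral_component[OF M insert.hyps G_meas G_bnd]
        integral_component_bounded[OF M insert.hyps G_meas G_bnd]
      by (rule prob_space.integrable_bounded[OF PiM_prob])
    show "integrable (PiM V M) (\<lambda>\<phi>. \<Prod>i\<in>I. F' i (restrict \<phi> (S' i)) powr w i)"
      using G'_meas G'_bnd by (rule prob_space.integrable_bounded[OF PiM_prob])
    show "(\<integral>y. ?G (\<phi>(v := y)) \<partial>M v) \<le> (\<Prod>i\<in>I. F' i (restrict \<phi> (S' i)) powr w i)"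
      if "\<phi> \<in> space (PiM V M)" for \<phi>
    proof -
      have "(\<integral>y. ?G (\<phi>(v := y)) \<partial>M v)
          \<le> (\<Prod>i\<in>I. (\<integral>y. F i (restrict (\<phi>(v := y)) (S i)) \<partial>M v) powr w i)"
        by (rule integral_prod_powr_update_le[OF M I that insert.hyps(2) insert.prems(1,2,3) a w
              insert.prems(4)[OF insertI1]])
      also have "\<dots> = (\<Prod>i\<in>I. F' i (restrict \<phi> (S' i)) powr w i)"
        by (intro prod.cong refl arg_cong2[where f="(powr)"] F'_restrict[symmetric])
      finally show ?thesis .
    qed
  qed
  also have "\<dots> \<le> (\<Prod>i\<in>I. (\<integral>x. F' i x \<partial>PiM (S' i) M) powr w i)"
    using F' by (intro insert.IH S'(1) W') auto
  also have "\<dots> = (\<Prod>i\<in>I. (\<integral>x. F i x \<partial>PiM (S i) M) powr w i)"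
    using F'(3) by (intro prod.cong) auto
  finally show ?case .
qed

lemma
  assumes "N \<in> L \<rightarrow>\<^sub>M prob_algebra K" "x \<in> space L"
  shows prob_space_kernel: "prob_space (N x)" and sets_kernel: "sets (N x) = sets K"
  using measurable_space[OF assms] by (auto simp: space_prob_algebra)

lemma emeasure_PiM_prod_emb_cong_sets:
  assumes Q: "\<And>i. i \<in> I \<Longrightarrow> prob_space (Q i)" "\<And>i. i \<in> I \<Longrightarrow> sets (Q i) = sets (N i)"
    and J: "finite J" "J \<subseteq> I" "\<And>j. j \<in> J \<Longrightarrow> X j \<in> sets (N j)"
  shows "emeasure (PiM I Q) (prod_emb I N J (\<Pi>\<^sub>E j\<in>J. X j)) = (\<Prod>j\<in>J. emeasure (Q j) (X j))"
proof -
  have "(\<Pi>\<^sub>E i\<in>I. space (N i)) = (\<Pi>\<^sub>E i\<in>I. space (Q i))"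
    by (rule PiE_cong) (rule sets_eq_imp_space_eq[OF Q(2), symmetric])
  then have "prod_emb I N J (\<Pi>\<^sub>E j\<in>J. X j) = prod_emb I Q J (\<Pi>\<^sub>E j\<in>J. X j)"
    by (simp add: prod_emb_def)
  also have "emeasure (PiM I Q) \<dots> = (\<Prod>j\<in>J. emeasure (Q j) (X j))"
    using Q J by (intro emeasure_PiM_emb) auto
  finally show ?thesis .
qed

lemma measurable_PiM_kernel:
  assumes Kf: "\<And>i. i \<in> I \<Longrightarrow> Kf i \<in> L \<rightarrow>\<^sub>M prob_algebra (N i)"
  shows "(\<lambda>x. PiM I (\<lambda>i. Kf i x)) \<in> L \<rightarrow>\<^sub>M prob_algebra (PiM I N)"
proof (rule measurable_prob_algebra_generated
    [OF sets_PiM Int_stable_prod_algebra prod_algebra_sets_into_space])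
  fix x assume x: "x \<in> space L"
  show "prob_space (PiM I (\<lambda>i. Kf i x))"
    using prob_space_kernel[OF Kf x] by (intro prob_space_PiM)
  show "sets (PiM I (\<lambda>i. Kf i x)) = sets (PiM I N)"
    using sets_kernel[OF Kf x] by (intro sets_PiM_cong) auto
next
  fix A assume "A \<in> prod_algebra I N"
  then obtain J X where J: "J \<noteq> {} \<or> I = {}" "finite J" "J \<subseteq> I" "X \<in> (\<Pi> j\<in>J. sets (N j))"
    and A: "A = prod_emb I N J (\<Pi>\<^sub>E j\<in>J. X j)"
    by (auto simp: prod_algebra_def)
  have "(\<lambda>x. \<Prod>j\<in>J. emeasure (Kf j x) (X j)) \<in> borel_measurable L"
  proof (rule borel_measurable_prod_ennreal)
    fix j assume "j \<in> J"
    with J show "(\<lambda>x. emeasure (Kf j x) (X j)) \<in> borel_measurable L"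
      by (intro measurable_compose
          [OF measurable_prob_algebraD[OF Kf] measurable_emeasure_subprob_algebra])
         auto
  qed
  moreover have "emeasure (PiM I (\<lambda>i. Kf i x)) A = (\<Prod>j\<in>J. emeasure (Kf j x) (X j))"
    if "x \<in> space L" for x
    unfolding A using prob_space_kernel[OF Kf that] sets_kernel[OF Kf that]
    using J by (intro emeasure_PiM_prod_emb_cong_sets) auto
  ultimately show "(\<lambda>x. emeasure (PiM I (\<lambda>i. Kf i x)) A) \<in> borel_measurable L"
    using measurable_cong[of L "\<lambda>x. emeasure (PiM I (\<lambda>i. Kf i x)) A"
        "\<lambda>x. \<Prod>j\<in>J. emeasure (Kf j x) (X j)"] by simp
qed

lemma integral_bind_prob_kernel:
  fixes f :: "'b \<Rightarrow> real"
  assumes f: "f \<in> borel_measurable L" and bnd: "\<And>x. x \<in> space L \<Longrightarrow> c \<le> f x \<and> f x \<le> d"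
    and M: "prob_space M" and N: "N \<in> M \<rightarrow>\<^sub>M prob_algebra L"
  shows "(\<integral>x. f x \<partial>(M \<bind> N)) = (\<integral>x. (\<integral>y. f y \<partial>N x) \<partial>M)"
proof (rule integral_bind[OF f _ measurable_prob_algebraD[OF N]])
  show "\<bar>f x\<bar> \<le> max \<bar>c\<bar> \<bar>d\<bar>" if "x \<in> space L" for x using bnd[OF that] by auto
  show "finite_measure M" using M by (rule prob_space.finite_measure)
  show "AE x in M. emeasure (N x) (space (N x)) \<le> ennreal 1"
    using prob_space_kernel[OF N] by (intro AE_I2) (simp add: prob_space.emeasure_space_1)
qed

lemma
  fixes f :: "'b \<Rightarrow> real"
  assumes N: "N \<in> M \<rightarrow>\<^sub>M prob_algebra L" and f: "f \<in> borel_measurable L"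
    and bnd: "\<And>y. y \<in> space L \<Longrightarrow> c \<le> f y \<and> f y \<le> d"
  shows borel_measurable_integral_prob_kernel: "(\<lambda>x. \<integral>y. f y \<partial>N x) \<in> borel_measurable M"
    and integral_prob_kernel_bounded:
      "x \<in> space M \<Longrightarrow> c \<le> (\<integral>y. f y \<partial>N x) \<and> (\<integral>y. f y \<partial>N x) \<le> d"
proof -
  show "(\<lambda>x. \<integral>y. f y \<partial>N x) \<in> borel_measurable M"
    by (rule measurable_compose
        [OF measurable_prob_algebraD[OF N] integral_measurable_subprob_algebra[OF f]])
  assume x: "x \<in> space M"
  note prob = prob_space_kernel[OF N x] and sets_eq = sets_kernel[OF N x]
  have space_eq: "space (N x) = space L" by (rule sets_eq_imp_space_eq[OF sets_eq])
  show "c \<le> (\<integral>y. f y \<partial>N x) \<and> (\<integral>y. f y \<partial>N x) \<le> d"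
    by (rule prob_space.integral_bounded[OF prob])
       (use f bnd in \<open>simp_all add: measurable_cong_sets[OF sets_eq refl] space_eq\<close>)
qed

lemma feasible_weighting_le_1:
  assumes "kpartite_hypergraph k V vpart n e" "k \<ge> 1" "feasible_weighting k V n e w" "i < n"
  shows "w i \<le> 1"
proof -
  have "e i 0 \<in> V" using assms by (simp add: kpartite_hypergraph_def)
  have "w i \<le> (\<Sum>i'\<in>{i'. i' < n \<and> e i 0 \<in> hedge k e i'}. w i')"
    using assms by (intro member_le_sum) (auto simp: hedge_def feasible_weighting_def)
  also have "\<dots> \<le> 1" using assms \<open>e i 0 \<in> V\<close> by (simp add: feasible_weighting_def)
  finally show ?thesis .
qed

locale networked_sample =
  fixes k :: nat and V :: "'v set" and vpart :: "'v \<Rightarrow> nat" and rho :: "nat \<Rightarrow> 'x measure"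
    and K :: "(nat \<Rightarrow> 'x) \<Rightarrow> real measure" and n :: nat and e :: "nat \<Rightarrow> nat \<Rightarrow> 'v"
  assumes hypergraph: "kpartite_hypergraph k V vpart n e"
    and prob_space_rho: "\<And>j. j < k \<Longrightarrow> prob_space (rho j)"
    and K_measurable: "K \<in> rho_x k rho \<rightarrow>\<^sub>M prob_algebra borel"
begin

definition pair_kernel :: "(nat \<Rightarrow> 'x) \<Rightarrow> ((nat \<Rightarrow> 'x) \<times> real) measure" where
  "pair_kernel x = distr (K x) (rho_x k rho \<Otimes>\<^sub>M borel) (\<lambda>y. (x, y))"

text \<open>The feature distribution of a vertex, made a probability space also outside the vertex set
  so that product-measure lemmas over arbitrary index sets apply.\<close>
definition vertex_measure :: "'v \<Rightarrow> 'x measure" where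
  "vertex_measure v = (if vpart v < k then rho (vpart v) else return (count_space UNIV) undefined)"

definition label_kernel :: "('v \<Rightarrow> 'x) \<Rightarrow> (('v \<Rightarrow> 'x) \<times> (nat \<Rightarrow> real)) measure" where
  "label_kernel \<phi> = distr (PiM {..<n} (\<lambda>i. K (hedge_features k e i \<phi>)))
     (feature_measure V vpart rho \<Otimes>\<^sub>M PiM {..<n} (\<lambda>_. borel)) (\<lambda>y. (\<phi>, y))"

lemma hedge_vertex: "i < n \<Longrightarrow> j < k \<Longrightarrow> e i j \<in> V \<and> vpart (e i j) = j"
  using hypergraph by (simp add: kpartite_hypergraph_def)

lemma prob_space_rho_x: "prob_space (rho_x k rho)"
  unfolding rho_x_def by (intro prob_space_PiM prob_space_rho) auto

lemma prob_space_K: "x \<in> space (rho_x k rho) \<Longrightarrow> prob_space (K x)"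
  by (rule prob_space_kernel[OF K_measurable])

lemma sets_K: "x \<in> space (rho_x k rho) \<Longrightarrow> sets (K x) = sets borel"
  by (rule sets_kernel[OF K_measurable])

lemma pair_kernel_measurable:
  "pair_kernel \<in> rho_x k rho \<rightarrow>\<^sub>M prob_algebra (rho_x k rho \<Otimes>\<^sub>M borel)"
  unfolding pair_kernel_def[abs_def] by (rule measurable_distr_prob_space2[OF K_measurable]) measurable

lemma rho_joint_eq_bind: "rho_joint k rho K = rho_x k rho \<bind> pair_kernel"
  by (simp add: rho_joint_def pair_kernel_def[abs_def])

lemma prob_space_rho_joint: "prob_space (rho_joint k rho K)"
  and sets_rho_joint: "sets (rho_joint k rho K) = sets (rho_x k rho \<Otimes>\<^sub>M borel)"
  using prob_space_bind'[OF _ pair_kernel_measurable] sets_bind'[OF _ pair_kernel_measurable]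
    prob_space_rho_x unfolding rho_joint_eq_bind by (simp_all add: space_prob_algebra)

lemma prob_space_vertex_measure: "prob_space (vertex_measure v)"
  by (auto simp: vertex_measure_def prob_space_rho intro: prob_space_return)

lemma feature_measure_eq: "feature_measure V vpart rho = PiM V vertex_measure"
  unfolding feature_measure_def using hypergraph
  by (intro PiM_cong) (auto simp: vertex_measure_def kpartite_hypergraph_def)

lemma prob_space_feature_measure: "prob_space (feature_measure V vpart rho)"
  unfolding feature_measure_eq by (intro prob_space_PiM prob_space_vertex_measure)

lemma hedge_features_measurable:
  assumes "i < n" "e i ` {..<k} \<subseteq> W"
  shows "hedge_features k e i \<in> PiM W vertex_measure \<rightarrow>\<^sub>M rho_x k rho"
  unfolding rho_x_def hedge_features_def[abs_def]
proof (rule measurable_restrict)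
  fix j assume "j \<in> {..<k}"
  with assms have "(\<lambda>\<omega>. \<omega> (e i j)) \<in> PiM W vertex_measure \<rightarrow>\<^sub>M vertex_measure (e i j)"
    by (intro measurable_component_singleton) auto
  with \<open>j \<in> {..<k}\<close> show "(\<lambda>\<omega>. \<omega> (e i j)) \<in> PiM W vertex_measure \<rightarrow>\<^sub>M rho j"
    using hedge_vertex[OF assms(1)] by (simp add: vertex_measure_def)
qed

text \<open>The vertices of a hyperedge lie in distinct parts, so its feature vector is a product of
  independent coordinates and has the feature distribution.\<close>
lemma distr_hedge_features:
  assumes "i < n" "e i ` {..<k} \<subseteq> W"
  shows "distr (PiM W vertex_measure) (rho_x k rho) (hedge_features k e i) = rho_x k rho"
proof -
  have "inj_on (e i) {..<k}"
    by (rule inj_onI) (metis hedge_vertex[OF assms(1)] lessThan_iff)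
  moreover have "PiM {..<k} (\<lambda>j. vertex_measure (e i j)) = rho_x k rho"
    unfolding rho_x_def using hedge_vertex[OF assms(1)]
      by (intro PiM_cong) (auto simp: vertex_measure_def)
  ultimately show ?thesis
    using distr_PiM_reindex[of W vertex_measure "e i" "{..<k}"] assms prob_space_vertex_measure
    by (auto simp: hedge_features_def[abs_def])
qed

lemma hedge_subset: "i < n \<Longrightarrow> e i ` {..<k} \<subseteq> V"
  using hedge_vertex by auto

lemma hedge_features_measurable_features:
  "i < n \<Longrightarrow> hedge_features k e i \<in> feature_measure V vpart rho \<rightarrow>\<^sub>M rho_x k rho"
  unfolding feature_measure_eq by (intro hedge_features_measurable hedge_subset)

lemma hedge_features_space:
  "i < n \<Longrightarrow> \<phi> \<in> space (feature_measure V vpart rho) \<Longrightarrow> hedge_features k e i \<phi> \<in> space (rho_x k rho)"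
  using measurable_space[OF hedge_features_measurable_features] .

lemma label_kernel_measurable:
  "label_kernel \<in> feature_measure V vpart rho
     \<rightarrow>\<^sub>M prob_algebra (feature_measure V vpart rho \<Otimes>\<^sub>M PiM {..<n} (\<lambda>_. borel))"
proof -
  have "(\<lambda>\<phi>. PiM {..<n} (\<lambda>i. K (hedge_features k e i \<phi>)))
      \<in> feature_measure V vpart rho \<rightarrow>\<^sub>M prob_algebra (PiM {..<n} (\<lambda>_. borel))"
    using hedge_features_measurable_features K_measurable
    by (intro measurable_PiM_kernel) (auto intro: measurable_compose)
  then show ?thesis
    unfolding label_kernel_def[abs_def] by (rule measurable_distr_prob_space2) measurable
qed

lemma networked_space_eq_bind:
  "networked_space k V vpart rho K n e = feature_measure V vpart rho \<bind> label_kernel"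
  by (simp add: networked_space_def label_kernel_def[abs_def])

lemma prob_space_networked_space: "prob_space (networked_space k V vpart rho K n e)"
  and sets_networked_space: "sets (networked_space k V vpart rho K n e)
    = sets (feature_measure V vpart rho \<Otimes>\<^sub>M PiM {..<n} (\<lambda>_. borel))"
  using prob_space_bind'[OF _ label_kernel_measurable] sets_bind'[OF _ label_kernel_measurable]
    prob_space_feature_measure
  unfolding networked_space_eq_bind by (simp_all add: space_prob_algebra)

lemma sample_z_measurable:
  assumes "i < n"
  shows "sample_z k e i
    \<in> feature_measure V vpart rho \<Otimes>\<^sub>M PiM {..<n} (\<lambda>_. borel) \<rightarrow>\<^sub>M rho_x k rho \<Otimes>\<^sub>M borel"
  unfolding sample_z_def[abs_def] using assms
  by (intro measurable_Pair measurable_compose[OF measurable_fst hedge_features_measurable_features]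
      measurable_compose[OF measurable_snd measurable_component_singleton]) auto

lemma distr_sample_z:
  assumes i: "i < n"
  shows "distr (networked_space k V vpart rho K n e) (rho_x k rho \<Otimes>\<^sub>M borel) (sample_z k e i)
    = rho_joint k rho K"
proof -
  let ?FM = "feature_measure V vpart rho"
  have "distr (networked_space k V vpart rho K n e) (rho_x k rho \<Otimes>\<^sub>M borel) (sample_z k e i)
      = ?FM \<bind> (\<lambda>\<phi>. distr (label_kernel \<phi>) (rho_x k rho \<Otimes>\<^sub>M borel) (sample_z k e i))"
    unfolding networked_space_eq_bind
    by (rule distr_bind
        [OF measurable_prob_algebraD[OF label_kernel_measurable] _ sample_z_measurable[OF i]])
       (rule prob_space.not_empty[OF prob_space_feature_measure])
  also have "\<dots> = ?FM \<bind> (\<lambda>\<phi>. pair_kernel (hedge_features k e i \<phi>))"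
  proof (rule bind_cong[OF refl])
    fix \<phi> assume \<phi>: "\<phi> \<in> space ?FM"
    let ?P = "PiM {..<n} (\<lambda>i. K (hedge_features k e i \<phi>))"
    have x: "hedge_features k e i \<phi> \<in> space (rho_x k rho)" by (rule hedge_features_space[OF i \<phi>])
    have sets_P: "sets ?P = sets (PiM {..<n} (\<lambda>_. borel))"
      using sets_K hedge_features_space[OF _ \<phi>] by (intro sets_PiM_cong) auto
    have "distr (label_kernel \<phi>) (rho_x k rho \<Otimes>\<^sub>M borel) (sample_z k e i)
        = distr ?P (rho_x k rho \<Otimes>\<^sub>M borel) ((\<lambda>y. (hedge_features k e i \<phi>, y)) \<circ> (\<lambda>y. y i))"
      unfolding label_kernel_def using \<phi> sets_P
      by (subst distr_distr[OF sample_z_measurable[OF i]])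
         (simp_all add: measurable_cong_sets[OF sets_P refl] comp_def sample_z_def)
    also have "\<dots> = distr (distr ?P (K (hedge_features k e i \<phi>)) (\<lambda>y. y i)) (rho_x k rho \<Otimes>\<^sub>M borel)
        (\<lambda>y. (hedge_features k e i \<phi>, y))"
      using x i by (intro distr_distr[symmetric]) (simp_all add: measurable_cong_sets[OF sets_K[OF x] refl])
    also have "distr ?P (K (hedge_features k e i \<phi>)) (\<lambda>y. y i) = K (hedge_features k e i \<phi>)"
      using prob_space_K hedge_features_space[OF _ \<phi>] i by (intro distr_PiM_component) auto
    finally show "distr (label_kernel \<phi>) (rho_x k rho \<Otimes>\<^sub>M borel) (sample_z k e i)
        = pair_kernel (hedge_features k e i \<phi>)"
      by (simp add: pair_kernel_def)
  qed
  also have "\<dots> = distr ?FM (rho_x k rho) (hedge_features k e i) \<bind> pair_kernel"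
    by (rule bind_distr[symmetric, OF hedge_features_measurable_features[OF i]
          measurable_prob_algebraD[OF pair_kernel_measurable]
          prob_space.not_empty[OF prob_space_feature_measure]])
  also have "\<dots> = rho_joint k rho K"
    using distr_hedge_features[OF i hedge_subset[OF i]]
      by (simp add: feature_measure_eq rho_joint_eq_bind)
  finally show ?thesis .
qed

lemma sample_z_measurable_networked_space:
  "i < n \<Longrightarrow> sample_z k e i \<in> networked_space k V vpart rho K n e \<rightarrow>\<^sub>M rho_x k rho \<Otimes>\<^sub>M borel"
  using sample_z_measurable by (simp add: measurable_cong_sets[OF sets_networked_space refl])

lemma AE_sample_z:
  assumes "AE z in rho_joint k rho K. P z"
  shows "AE \<omega> in networked_space k V vpart rho K n e. \<forall>i<n. P (sample_z k e i \<omega>)"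
proof -
  have "AE \<omega> in networked_space k V vpart rho K n e. \<forall>i\<in>{..<n}. P (sample_z k e i \<omega>)"
  proof (rule AE_finite_allI)
    fix i assume "i \<in> {..<n}"
    then have i: "i < n" by simp
    show "AE \<omega> in networked_space k V vpart rho K n e. P (sample_z k e i \<omega>)"
      by (rule AE_distrD[OF sample_z_measurable_networked_space[OF i]])
         (unfold distr_sample_z[OF i], rule assms)
  qed simp
  then show ?thesis by (auto elim: eventually_mono)
qed

lemma Pair_measurable_K:
  "x \<in> space (rho_x k rho) \<Longrightarrow> Pair x \<in> K x \<rightarrow>\<^sub>M rho_x k rho \<Otimes>\<^sub>M borel"
  by (simp add: measurable_cong_sets[OF sets_K refl])

lemma integral_pair_kernel:
  fixes f :: "(nat \<Rightarrow> 'x) \<times> real \<Rightarrow> real"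
  assumes "x \<in> space (rho_x k rho)" "f \<in> borel_measurable (rho_x k rho \<Otimes>\<^sub>M borel)"
  shows "(\<integral>z. f z \<partial>pair_kernel x) = (\<integral>y. f (x, y) \<partial>K x)"
  unfolding pair_kernel_def by (rule integral_distr[OF Pair_measurable_K[OF assms(1)] assms(2)])

text \<open>Given the features, the labels are independent.\<close>
lemma integral_label_kernel_prod:
  fixes F :: "nat \<Rightarrow> ('v \<Rightarrow> 'x) \<times> real \<Rightarrow> real"
  assumes \<phi>: "\<phi> \<in> space (feature_measure V vpart rho)"
    and F: "\<And>i. i < n \<Longrightarrow> F i \<in> borel_measurable (feature_measure V vpart rho \<Otimes>\<^sub>M borel)"
    and int: "\<And>i. i < n \<Longrightarrow> integrable (K (hedge_features k e i \<phi>)) (\<lambda>y. F i (\<phi>, y))"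
  shows "(\<integral>\<omega>. (\<Prod>i<n. F i (fst \<omega>, snd \<omega> i)) \<partial>label_kernel \<phi>)
    = (\<Prod>i<n. \<integral>y. F i (\<phi>, y) \<partial>K (hedge_features k e i \<phi>))"
proof -
  let ?x = "\<lambda>i. hedge_features k e i \<phi>"
  define Kf where "Kf i = (if i < n then K (?x i) else return (count_space UNIV) 0)" for i
  have x: "?x i \<in> space (rho_x k rho)" if "i < n" for i using hedge_features_space[OF that \<phi>] .
  have "prob_space (Kf i)" for i
    using prob_space_K[OF x] by (auto simp: Kf_def intro: prob_space_return)
  then interpret product_sigma_finite Kf
    unfolding product_sigma_finite_def using prob_space_imp_sigma_finite by blast
  have PiM_eq: "PiM {..<n} (\<lambda>i. K (?x i)) = PiM {..<n} Kf" by (intro PiM_cong) (auto simp: Kf_def)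
  have sets_PiM: "sets (PiM {..<n} Kf) = sets (PiM {..<n} (\<lambda>_. borel))"
    using sets_K[OF x] by (intro sets_PiM_cong) (auto simp: Kf_def)
  have "Pair \<phi> \<in> PiM {..<n} Kf \<rightarrow>\<^sub>M feature_measure V vpart rho \<Otimes>\<^sub>M PiM {..<n} (\<lambda>_. borel)"
    using \<phi> by (simp add: measurable_cong_sets[OF sets_PiM refl])
  moreover have "(\<lambda>\<omega>. \<Prod>i<n. F i (fst \<omega>, snd \<omega> i))
      \<in> borel_measurable (feature_measure V vpart rho \<Otimes>\<^sub>M PiM {..<n} (\<lambda>_. borel))"
    by (intro borel_measurable_prod measurable_compose[OF _ F] measurable_Pair measurable_fst
        measurable_compose[OF measurable_snd measurable_component_singleton]) auto
  ultimately have "(\<integral>\<omega>. (\<Prod>i<n. F i (fst \<omega>, snd \<omega> i)) \<partial>label_kernel \<phi>)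
      = (\<integral>y. (\<Prod>i<n. F i (\<phi>, y i)) \<partial>PiM {..<n} Kf)"
    unfolding label_kernel_def PiM_eq by (simp add: integral_distr)
  also have "\<dots> = (\<Prod>i<n. \<integral>y. F i (\<phi>, y) \<partial>Kf i)"
    using int by (intro product_integral_prod) (auto simp: Kf_def)
  also have "\<dots> = (\<Prod>i<n. \<integral>y. F i (\<phi>, y) \<partial>K (?x i))"
    by (intro prod.cong) (auto simp: Kf_def)
  finally show ?thesis .
qed

lemma integral_label_kernel_prod_powr_le:
  fixes f :: "(nat \<Rightarrow> 'x) \<times> real \<Rightarrow> real"
  assumes \<phi>: "\<phi> \<in> space (feature_measure V vpart rho)"
    and f: "f \<in> borel_measurable (rho_x k rho \<Otimes>\<^sub>M borel)"
    and bnd: "\<And>z. z \<in> space (rho_x k rho \<Otimes>\<^sub>M borel) \<Longrightarrow> a \<le> f z \<and> f z \<le> b" and a: "a > 0"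
    and w: "\<And>i. i < n \<Longrightarrow> 0 \<le> w i \<and> w i \<le> 1"
  shows "(\<integral>\<omega>. (\<Prod>i<n. f (sample_z k e i \<omega>) powr w i) \<partial>label_kernel \<phi>)
    \<le> (\<Prod>i<n. (\<integral>y. f (hedge_features k e i \<phi>, y) \<partial>K (hedge_features k e i \<phi>)) powr w i)"
proof -
  let ?x = "\<lambda>i. hedge_features k e i \<phi>"
  have x: "?x i \<in> space (rho_x k rho)" if "i < n" for i using hedge_features_space[OF that \<phi>] .
  have f_x: "(\<lambda>y. f (?x i, y)) \<in> borel_measurable (K (?x i))" if "i < n" for i
    using measurable_compose[OF Pair_measurable_K[OF x[OF that]] f] .
  have bnd_x: "a \<le> f (?x i, y) \<and> f (?x i, y) \<le> b" if "i < n" for i y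
    using bnd[of "(?x i, y)"] x[OF that] by (simp add: space_pair_measure)
  define F where "F i \<omega> = f (hedge_features k e i (fst \<omega>), snd \<omega>) powr w i" for i \<omega>
  have F: "F i \<in> borel_measurable (feature_measure V vpart rho \<Otimes>\<^sub>M borel)" if "i < n" for i
    unfolding F_def[abs_def]
    by (intro powr_real_measurable measurable_const measurable_compose[OF _ f] measurable_Pair
        measurable_compose[OF measurable_fst hedge_features_measurable_features[OF that]] measurable_snd)
       simp
  have int: "integrable (K (?x i)) (\<lambda>y. F i (\<phi>, y))" if "i < n" for i
  proof -
    have "(\<lambda>y. F i (\<phi>, y)) \<in> borel_measurable (K (?x i))"
      unfolding F_def using f_x[OF that] by (intro powr_real_measurable) auto
    moreover have "0 \<le> F i (\<phi>, y) \<and> F i (\<phi>, y) \<le> b powr w i" for y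
      unfolding F_def using bnd_x[OF that, of y] a w[OF that] by (auto intro: powr_mono2)
    ultimately show ?thesis by (intro prob_space.integrable_bounded[OF prob_space_K[OF x[OF that]]])
  qed
  have "(\<integral>\<omega>. (\<Prod>i<n. f (sample_z k e i \<omega>) powr w i) \<partial>label_kernel \<phi>)
      = (\<integral>\<omega>. (\<Prod>i<n. F i (fst \<omega>, snd \<omega> i)) \<partial>label_kernel \<phi>)"
    by (simp add: F_def sample_z_def)
  also have "\<dots> = (\<Prod>i<n. \<integral>y. f (?x i, y) powr w i \<partial>K (?x i))"
    using integral_label_kernel_prod[OF \<phi> F int] by (simp add: F_def)
  also have "\<dots> \<le> (\<Prod>i<n. (\<integral>y. f (?x i, y) \<partial>K (?x i)) powr w i)"
  proof (rule prod_mono)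
    fix i assume "i \<in> {..<n}"
    then have i: "i < n" by simp
    show "0 \<le> (\<integral>y. f (?x i, y) powr w i \<partial>K (?x i))
        \<and> (\<integral>y. f (?x i, y) powr w i \<partial>K (?x i)) \<le> (\<integral>y. f (?x i, y) \<partial>K (?x i)) powr w i"
      using w[OF i] bnd_x[OF i]
      by (auto intro: integral_nonneg_AE
          prob_space.integral_powr_le[OF prob_space_K[OF x[OF i]] f_x[OF i] _ a])
  qed
  finally show ?thesis .
qed

lemma integral_features_prod_powr_le:
  fixes g :: "(nat \<Rightarrow> 'x) \<Rightarrow> real"
  assumes g: "g \<in> borel_measurable (rho_x k rho)"
    and bnd: "\<And>x. x \<in> space (rho_x k rho) \<Longrightarrow> a \<le> g x \<and> g x \<le> b" and a: "a > 0"
    and w: "feasible_weighting k V n e w"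
  shows "(\<integral>\<phi>. (\<Prod>i<n. g (hedge_features k e i \<phi>) powr w i) \<partial>feature_measure V vpart rho)
    \<le> (\<Prod>i<n. (\<integral>x. g x \<partial>rho_x k rho) powr w i)"
proof -
  have hedge_sub: "e i ` {..<k} \<subseteq> hedge k e i" for i by (auto simp: hedge_def)
  have hedge_features_restrict:
    "hedge_features k e i (restrict \<phi> (hedge k e i)) = hedge_features k e i \<phi>" for i \<phi>
    using hedge_sub[of i] by (auto simp: hedge_features_def fun_eq_iff)
  have "(\<integral>\<phi>. (\<Prod>i<n. g (hedge_features k e i \<phi>) powr w i) \<partial>feature_measure V vpart rho)
      = (\<integral>\<phi>. (\<Prod>i\<in>{..<n}. g (hedge_features k e i (restrict \<phi> (hedge k e i))) powr w i)
           \<partial>PiM V vertex_measure)"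
    by (simp add: feature_measure_eq hedge_features_restrict)
  also have "\<dots> \<le> (\<Prod>i\<in>{..<n}. (\<integral>\<psi>. g (hedge_features k e i \<psi>) \<partial>PiM (hedge k e i) vertex_measure) powr w i)"
  proof (rule Finner_inequality[OF _ prob_space_vertex_measure _ _ _ _ a])
    show "finite V" using hypergraph by (simp add: kpartite_hypergraph_def)
    show "hedge k e i \<subseteq> V" if "i \<in> {..<n}" for i
      using hedge_vertex that by (auto simp: hedge_def)
    show "(\<lambda>\<psi>. g (hedge_features k e i \<psi>)) \<in> borel_measurable (PiM (hedge k e i) vertex_measure)"
      if "i \<in> {..<n}" for i
      using that by (intro measurable_compose[OF hedge_features_measurable g] hedge_sub) auto
    show "a \<le> g (hedge_features k e i \<psi>) \<and> g (hedge_features k e i \<psi>) \<le> b"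
      if "i \<in> {..<n}" "\<psi> \<in> space (PiM (hedge k e i) vertex_measure)" for i \<psi>
      using that by (intro bnd measurable_space[OF hedge_features_measurable[OF _ hedge_sub]]) auto
    show "0 \<le> w i" if "i \<in> {..<n}" for i using w that by (simp add: feasible_weighting_def)
    show "sum w {i \<in> {..<n}. v \<in> hedge k e i} \<le> 1" if "v \<in> V" for v
      using w that by (simp add: feasible_weighting_def)
  qed simp
  also have "\<dots> = (\<Prod>i<n. (\<integral>x. g x \<partial>rho_x k rho) powr w i)"
    by (intro prod.cong refl)
       (simp add: integral_distr[symmetric, OF hedge_features_measurable[OF _ hedge_sub] g]
         distr_hedge_features[OF _ hedge_sub])
  finally show ?thesis .
qed

lemma integral_networked_prod_powr_le_integral_features:
  fixes f :: "(nat \<Rightarrow> 'x) \<times> real \<Rightarrow> real"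
  assumes f: "f \<in> borel_measurable (rho_x k rho \<Otimes>\<^sub>M borel)"
    and bnd: "\<And>z. z \<in> space (rho_x k rho \<Otimes>\<^sub>M borel) \<Longrightarrow> a \<le> f z \<and> f z \<le> b" and a: "a > 0"
    and w: "\<And>i. i < n \<Longrightarrow> 0 \<le> w i \<and> w i \<le> 1"
  defines "g \<equiv> \<lambda>x. \<integral>z. f z \<partial>pair_kernel x"
  shows "(\<integral>\<omega>. (\<Prod>i<n. f (sample_z k e i \<omega>) powr w i) \<partial>networked_space k V vpart rho K n e)
    \<le> (\<integral>\<phi>. (\<Prod>i<n. g (hedge_features k e i \<phi>) powr w i) \<partial>feature_measure V vpart rho)"
proof -
  let ?FM = "feature_measure V vpart rho" and ?B = "\<Prod>i<n. b powr w i"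
  let ?F = "\<lambda>\<omega>. \<Prod>i<n. f (sample_z k e i \<omega>) powr w i"
  let ?R = "\<lambda>\<phi>. \<Prod>i<n. g (hedge_features k e i \<phi>) powr w i"
  have g_meas: "g \<in> borel_measurable (rho_x k rho)"
    unfolding g_def by (rule borel_measurable_integral_prob_kernel[OF pair_kernel_measurable f bnd])
  have g_bnd: "a \<le> g x \<and> g x \<le> b" if "x \<in> space (rho_x k rho)" for x
    unfolding g_def by (rule integral_prob_kernel_bounded[OF pair_kernel_measurable f bnd that])
  have F_meas: "?F \<in> borel_measurable (?FM \<Otimes>\<^sub>M PiM {..<n} (\<lambda>_. borel))"
    by (intro borel_measurable_prod powr_real_measurable measurable_compose[OF sample_z_measurable f])
       auto
  have F_bnd: "0 \<le> ?F \<omega> \<and> ?F \<omega> \<le> ?B" if "\<omega> \<in> space (?FM \<Otimes>\<^sub>M PiM {..<n} (\<lambda>_. borel))" for \<omega>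
    using that w by (intro prod_powr_bounded[OF _ a] bnd measurable_space[OF sample_z_measurable]) auto
  have R_meas: "?R \<in> borel_measurable ?FM"
    by (intro borel_measurable_prod powr_real_measurable
        measurable_compose[OF hedge_features_measurable_features g_meas]) auto
  have R_bnd: "0 \<le> ?R \<phi> \<and> ?R \<phi> \<le> ?B" if "\<phi> \<in> space ?FM" for \<phi>
    using that w by (intro prod_powr_bounded[OF _ a] g_bnd hedge_features_space) auto
  have "(\<integral>\<omega>. ?F \<omega> \<partial>networked_space k V vpart rho K n e) = (\<integral>\<phi>. (\<integral>\<omega>. ?F \<omega> \<partial>label_kernel \<phi>) \<partial>?FM)"
    unfolding networked_space_eq_bind
    by (rule integral_bind_prob_kernel
        [OF F_meas F_bnd prob_space_feature_measure label_kernel_measurable])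
  also have "\<dots> \<le> (\<integral>\<phi>. ?R \<phi> \<partial>?FM)"
  proof (rule integral_mono)
    show "integrable ?FM (\<lambda>\<phi>. \<integral>\<omega>. ?F \<omega> \<partial>label_kernel \<phi>)"
      using integral_prob_kernel_bounded[OF label_kernel_measurable F_meas F_bnd]
      by (intro prob_space.integrable_bounded[OF prob_space_feature_measure]
          borel_measurable_integral_prob_kernel[OF label_kernel_measurable F_meas F_bnd])
    show "integrable ?FM ?R"
      using R_bnd by (intro prob_space.integrable_bounded[OF prob_space_feature_measure R_meas])
    show "(\<integral>\<omega>. ?F \<omega> \<partial>label_kernel \<phi>) \<le> ?R \<phi>" if "\<phi> \<in> space ?FM" for \<phi>
      using integral_label_kernel_prod_powr_le[OF that f bnd a w]
        integral_pair_kernel[OF hedge_features_space[OF _ that] f] by (simp add: g_def)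
  qed
  finally show ?thesis .
qed

text \<open>The labels are integrated out first, using Jensen's inequality and w i <= 1; feasibility of
  the weighting enters through Finner's inequality for the remaining functions of the features.\<close>
lemma integral_networked_prod_powr_le:
  fixes f :: "(nat \<Rightarrow> 'x) \<times> real \<Rightarrow> real"
  assumes f: "f \<in> borel_measurable (rho_x k rho \<Otimes>\<^sub>M borel)"
    and bnd: "\<And>z. z \<in> space (rho_x k rho \<Otimes>\<^sub>M borel) \<Longrightarrow> a \<le> f z \<and> f z \<le> b" and a: "a > 0"
    and w: "feasible_weighting k V n e w" and w_le_1: "\<And>i. i < n \<Longrightarrow> w i \<le> 1"
  shows "(\<integral>\<omega>. (\<Prod>i<n. f (sample_z k e i \<omega>) powr w i) \<partial>networked_space k V vpart rho K n e)
    \<le> (\<integral>z. f z \<partial>rho_joint k rho K) powr (\<Sum>i<n. w i)"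
proof -
  define g where "g x = (\<integral>z. f z \<partial>pair_kernel x)" for x
  have g_meas: "g \<in> borel_measurable (rho_x k rho)"
    unfolding g_def by (rule borel_measurable_integral_prob_kernel[OF pair_kernel_measurable f bnd])
  have g_bnd: "a \<le> g x \<and> g x \<le> b" if "x \<in> space (rho_x k rho)" for x
    unfolding g_def by (rule integral_prob_kernel_bounded[OF pair_kernel_measurable f bnd that])
  have mean_pos: "(\<integral>z. f z \<partial>rho_joint k rho K) > 0"
    using bnd f a
    by (intro order.strict_trans2[OF a]
        prob_space.integral_bounded[OF prob_space_rho_joint, THEN conjunct1])
       (auto simp: measurable_cong_sets[OF sets_rho_joint refl] sets_eq_imp_space_eq[OF sets_rho_joint])
  have "(\<integral>\<omega>. (\<Prod>i<n. f (sample_z k e i \<omega>) powr w i) \<partial>networked_space k V vpart rho K n e)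
      \<le> (\<integral>\<phi>. (\<Prod>i<n. g (hedge_features k e i \<phi>) powr w i) \<partial>feature_measure V vpart rho)"
    unfolding g_def using w w_le_1
    by (intro integral_networked_prod_powr_le_integral_features[OF f bnd a])
       (auto simp: feasible_weighting_def)
  also have "\<dots> \<le> (\<Prod>i<n. (\<integral>x. g x \<partial>rho_x k rho) powr w i)"
    by (rule integral_features_prod_powr_le[OF g_meas g_bnd a w])
  also have "(\<integral>x. g x \<partial>rho_x k rho) = (\<integral>z. f z \<partial>rho_joint k rho K)"
    unfolding g_def rho_joint_eq_bind
    by (rule integral_bind_prob_kernel[symmetric, OF f bnd prob_space_rho_x pair_kernel_measurable])
  also have "(\<Prod>i<n. (\<integral>z. f z \<partial>rho_joint k rho K) powr w i)
      = (\<integral>z. f z \<partial>rho_joint k rho K) powr (\<Sum>i<n. w i)"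
    using mean_pos by (simp add: powr_sum)
  finally show ?thesis .
qed

text \<open>Bennett's estimate needs a bound that holds everywhere, so the deviation is truncated;
  the truncation changes the weighted sum only on a null set.\<close>
lemma integral_exp_weighted_sum_le:
  fixes \<xi> :: "(nat \<Rightarrow> 'x) \<times> real \<Rightarrow> real"
  assumes \<xi>: "\<xi> \<in> borel_measurable (rho_joint k rho K)" "integrable (rho_joint k rho K) \<xi>"
    and mean: "\<mu> = (\<integral>z. \<xi> z \<partial>rho_joint k rho K)"
    and var: "\<sigma>\<^sup>2 = (\<integral>z. (\<xi> z - \<mu>)\<^sup>2 \<partial>rho_joint k rho K)"
    and bound: "AE z in rho_joint k rho K. \<bar>\<xi> z - \<mu>\<bar> \<le> M" and M: "M > 0" and t: "t \<ge> 0"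
    and w: "feasible_weighting k V n e w" and w_le_1: "\<And>i. i < n \<Longrightarrow> w i \<le> 1"
  defines "S \<equiv> \<lambda>\<omega>. \<Sum>i<n. w i * (\<xi> (sample_z k e i \<omega>) - \<mu>)"
  shows "integrable (networked_space k V vpart rho K n e) (\<lambda>\<omega>. exp (t * S \<omega>))"
    and "(\<integral>\<omega>. exp (t * S \<omega>) \<partial>networked_space k V vpart rho K n e)
      \<le> exp ((\<Sum>i<n. w i) * \<sigma>\<^sup>2 / M\<^sup>2 * (exp (t * M) - 1 - t * M))"
proof -
  let ?RJ = "rho_joint k rho K" and ?NS = "networked_space k V vpart rho K n e"
  interpret RJ: prob_space ?RJ by (rule prob_space_rho_joint)
  interpret NS: prob_space ?NS by (rule prob_space_networked_space)
  define X where "X z = max (- M) (min M (\<xi> z - \<mu>))" for z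
  note X = RJ.truncated_deviation[OF \<xi> mean bound less_imp_le[OF M],
      folded X_def[abs_def], folded X_def var]
  define S' where "S' \<omega> = (\<Sum>i<n. w i * X (sample_z k e i \<omega>))" for \<omega>
  have w_nonneg: "\<And>i. i < n \<Longrightarrow> 0 \<le> w i" using w by (simp add: feasible_weighting_def)
  have X_meas': "X \<in> borel_measurable (rho_x k rho \<Otimes>\<^sub>M borel)"
    using X(1) by (simp add: measurable_cong_sets[OF sets_rho_joint refl])
  have exp_X_bnd: "exp (- (t * M)) \<le> exp (t * X z) \<and> exp (t * X z) \<le> exp (t * M)" for z
    using X(2)[of z] t mult_left_mono[of "- M" "X z" t] mult_left_mono[of "X z" M t]
    by (auto simp: abs_le_iff)
  have exp_S': "exp (t * S' \<omega>) = (\<Prod>i<n. exp (t * X (sample_z k e i \<omega>)) powr w i)" for \<omega>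
    by (simp add: S'_def exp_sum sum_distrib_left powr_def algebra_simps)
  have "(\<integral>\<omega>. exp (t * S' \<omega>) \<partial>?NS) \<le> (\<integral>z. exp (t * X z) \<partial>?RJ) powr (\<Sum>i<n. w i)"
    unfolding exp_S' using X_meas' exp_X_bnd
    by (intro integral_networked_prod_powr_le[OF _ _ _ w w_le_1]) auto
  also have "\<dots> \<le> exp (\<sigma>\<^sup>2 / M\<^sup>2 * (exp (t * M) - 1 - t * M)) powr (\<Sum>i<n. w i)"
    using RJ.Bennett_mgf_le[OF X(1) _ M t X(4)] X(2,5) w_nonneg
      RJ.integral_bounded[of "\<lambda>z. exp (t * X z)", OF _ exp_X_bnd] X(1)
    by (intro powr_mono2 sum_nonneg) auto
  also have "\<dots> = exp ((\<Sum>i<n. w i) * \<sigma>\<^sup>2 / M\<^sup>2 * (exp (t * M) - 1 - t * M))"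
    by (simp add: powr_def)
  finally have bound_S': "(\<integral>\<omega>. exp (t * S' \<omega>) \<partial>?NS) \<le> \<dots>" .
  have S_AE: "AE \<omega> in ?NS. exp (t * S' \<omega>) = exp (t * S \<omega>)"
    using AE_sample_z[OF X(3)] by (rule eventually_mono) (simp add: S_def S'_def)
  have \<xi>': "\<xi> \<in> borel_measurable (rho_x k rho \<Otimes>\<^sub>M borel)"
    using \<xi>(1) by (simp add: measurable_cong_sets[OF sets_rho_joint refl])
  have "S \<in> borel_measurable ?NS"
    unfolding S_def
    by (intro borel_measurable_sum borel_measurable_times borel_measurable_diff borel_measurable_const
        measurable_compose[OF sample_z_measurable_networked_space \<xi>']) simp
  then have S_meas: "(\<lambda>\<omega>. exp (t * S \<omega>)) \<in> borel_measurable ?NS" by measurable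
  have "S' \<in> borel_measurable ?NS"
    unfolding S'_def
    by (intro borel_measurable_sum borel_measurable_times borel_measurable_const
        measurable_compose[OF sample_z_measurable_networked_space X_meas']) simp
  then have S'_meas: "(\<lambda>\<omega>. exp (t * S' \<omega>)) \<in> borel_measurable ?NS" by measurable
  have "0 \<le> exp (t * S' \<omega>) \<and> exp (t * S' \<omega>) \<le> (\<Prod>i<n. exp (t * M) powr w i)" for \<omega>
    unfolding exp_S' using exp_X_bnd w_nonneg
    by (intro prod_powr_bounded[where a="exp (- (t * M))", OF _ exp_gt_zero]) auto
  then have S'_int: "integrable ?NS (\<lambda>\<omega>. exp (t * S' \<omega>))"
    by (intro NS.integrable_bounded[OF S'_meas])
  show "integrable ?NS (\<lambda>\<omega>. exp (t * S \<omega>))"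
    by (rule integrable_cong_AE_imp[OF S'_int S_meas S_AE])
  have "(\<integral>\<omega>. exp (t * S \<omega>) \<partial>?NS) = (\<integral>\<omega>. exp (t * S' \<omega>) \<partial>?NS)"
    by (rule integral_cong_AE[OF S_meas S'_meas eventually_mono[OF S_AE sym]])
  with bound_S' show "(\<integral>\<omega>. exp (t * S \<omega>) \<partial>?NS)
      \<le> exp ((\<Sum>i<n. w i) * \<sigma>\<^sup>2 / M\<^sup>2 * (exp (t * M) - 1 - t * M))" by simp
qed

lemma Bennett_inequality:
  fixes \<xi> :: "(nat \<Rightarrow> 'x) \<times> real \<Rightarrow> real"
  assumes \<xi>: "\<xi> \<in> borel_measurable (rho_joint k rho K)" "integrable (rho_joint k rho K) \<xi>"
    and mean: "\<mu> = (\<integral>z. \<xi> z \<partial>rho_joint k rho K)"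
    and var: "\<sigma>\<^sup>2 = (\<integral>z. (\<xi> z - \<mu>)\<^sup>2 \<partial>rho_joint k rho K)"
    and bound: "AE z in rho_joint k rho K. \<bar>\<xi> z - \<mu>\<bar> \<le> M" and M: "M > 0"
    and w: "feasible_weighting k V n e w" and w_le_1: "\<And>i. i < n \<Longrightarrow> w i \<le> 1"
    and v: "(\<Sum>i<n. w i) * \<sigma>\<^sup>2 > 0" and \<epsilon>: "\<epsilon> > 0"
  shows "measure (networked_space k V vpart rho K n e)
      {\<omega> \<in> space (networked_space k V vpart rho K n e).
        (\<Sum>i<n. w i * (\<xi> (sample_z k e i \<omega>) - \<mu>)) \<ge> \<epsilon>}
    \<le> exp (- ((\<Sum>i<n. w i) * \<sigma>\<^sup>2 / M\<^sup>2) * bennett_h (M * \<epsilon> / ((\<Sum>i<n. w i) * \<sigma>\<^sup>2)))"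
    (is "measure ?NS {\<omega> \<in> space ?NS. ?S \<omega> \<ge> \<epsilon>} \<le> _")
proof -
  let ?v = "(\<Sum>i<n. w i) * \<sigma>\<^sup>2"
  define t where "t = ln (1 + M * \<epsilon> / ?v) / M"
  have "M * \<epsilon> / ?v > 0" using M v \<epsilon> by simp
  then have t: "t > 0" using M ln_gt_zero[of "1 + M * \<epsilon> / ?v"] by (simp add: t_def)
  note mgf = integral_exp_weighted_sum_le[OF \<xi> mean var bound M less_imp_le[OF t] w w_le_1]
  have "measure ?NS {\<omega> \<in> space ?NS. ?S \<omega> \<ge> \<epsilon>}
      = measure ?NS {\<omega> \<in> space ?NS. exp (t * ?S \<omega>) \<ge> exp (t * \<epsilon>)}"
    using t by simp
  also have "\<dots> \<le> (\<integral>\<omega>. exp (t * ?S \<omega>) \<partial>?NS) / exp (t * \<epsilon>)"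
    using mgf(1) by (intro integral_Markov_inequality_measure[where A="space ?NS"]) auto
  also have "\<dots> \<le> exp (?v / M\<^sup>2 * (exp (t * M) - 1 - t * M)) / exp (t * \<epsilon>)"
    using mgf(2) by (intro divide_right_mono) auto
  also have "\<dots> = exp (- (?v / M\<^sup>2) * bennett_h (M * \<epsilon> / ?v))"
    using Bennett_exponent[of M ?v \<epsilon>] M v \<epsilon> by (simp add: exp_diff[symmetric] t_def)
  finally show ?thesis .
qed

end

theorem lemma2:
  fixes k n :: nat and V :: "'v set" and vpart :: "'v \<Rightarrow> nat" and e :: "nat \<Rightarrow> nat \<Rightarrow> 'v"
    and rho :: "nat \<Rightarrow> 'x measure" and K :: "(nat \<Rightarrow> 'x) \<Rightarrow> real measure"
    and \<xi> :: "(nat \<Rightarrow> 'x) \<times> real \<Rightarrow> real" and \<mu> \<sigma> M \<epsilon> :: real and w :: "nat \<Rightarrow> real"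
  assumes G: "kpartite_hypergraph k V vpart n e" and k: "k \<ge> 1"
    and rho: "\<And>j. j < k \<Longrightarrow> prob_space (rho j)"
    and K: "K \<in> measurable (rho_x k rho) (prob_algebra borel)"
    and \<xi>_meas: "\<xi> \<in> borel_measurable (rho_joint k rho K)"
    and \<xi>_int: "integrable (rho_joint k rho K) \<xi>"
    and mean: "\<mu> = (\<integral>z. \<xi> z \<partial>rho_joint k rho K)"
    and var: "\<sigma>\<^sup>2 = (\<integral>z. (\<xi> z - \<mu>)\<^sup>2 \<partial>rho_joint k rho K)"
    and bound: "AE z in rho_joint k rho K. \<bar>\<xi> z - \<mu>\<bar> \<le> M"
    and opt: "optimal_weighting k V n e w"
    and eps: "\<epsilon> > 0"
  shows "measure (networked_space k V vpart rho K n e)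
           {\<omega> \<in> space (networked_space k V vpart rho K n e).
              (\<Sum>i<n. w i * (\<xi> (sample_z k e i \<omega>) - \<mu>)) \<ge> \<epsilon>}
         \<le> exp (- (s_G k V n e * \<sigma>\<^sup>2 / M\<^sup>2)
                  * bennett_h (M * \<epsilon> / (s_G k V n e * \<sigma>\<^sup>2)))"
proof -
  interpret networked_sample k V vpart rho K n e
    using G rho K by (simp add: networked_sample_def)
  have w: "feasible_weighting k V n e w" and s: "s_G k V n e = (\<Sum>i<n. w i)"
    using opt by (simp_all add: optimal_weighting_def)
  have "0 \<le> (\<Sum>i<n. w i)" using w by (intro sum_nonneg) (simp add: feasible_weighting_def)
  moreover have "M \<ge> 0"
  proof (rule ccontr)
    assume "\<not> M \<ge> 0"
    then have "AE z in rho_joint k rho K. False" using bound by (auto elim: eventually_mono)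
    then show False using prob_space.AE_False[OF prob_space_rho_joint] by simp
  qed
  ultimately consider "M = 0 \<or> (\<Sum>i<n. w i) * \<sigma>\<^sup>2 = 0" | "M > 0" "(\<Sum>i<n. w i) * \<sigma>\<^sup>2 > 0"
    by (metis less_eq_real_def zero_le_mult_iff zero_le_power2)
  then show ?thesis
  proof cases
    case 1
    \<comment> \<open>the bound degenerates to 1, as division by zero gives zero\<close>
    then have "exp (- ((\<Sum>i<n. w i) * \<sigma>\<^sup>2 / M\<^sup>2) * bennett_h (M * \<epsilon> / ((\<Sum>i<n. w i) * \<sigma>\<^sup>2))) = 1"
      by auto
    then show ?thesis using prob_space.prob_le_1[OF prob_space_networked_space] by (simp only: s)
  next
    case 2
    then show ?thesis
      unfolding s using feasible_weighting_le_1[OF G k w]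
      by (intro Bennett_inequality[OF \<xi>_meas \<xi>_int mean var bound _ w _ _ eps])
  qed
qed

end
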